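(* Consider a $2\times N$ switch with traffic pattern consisting of one broadcast flow from input 1 to all $N$ outputs with rate $r_0$ and, for each $i\in[N]$, a unicast from input 2 to output $i$ with rate $r_i$. With fanout splitting but no coding, a speedup of at least $1.5-\frac1N$ is needed to sustain all admissible traffic; i.e. if $s$ is such that $\frac1s\mathbf r\in\mathbf R_{fs}$ for every admissible $\mathbf r$, then $s\ge 1.5-\frac1N$.
   Context: Admissible: $r_i\ge0$ for all $i$, $r_0\le 1$, $\sum_{i=1}^N r_i\le1$, and $r_0+r_i\le1$ for $i\in[N]$. $\mathbf R_{fs}$ is the rate region with fanout splitting but no coding: the set of rational rate vectors for which there is a frame-based schedule (a fixed sequence of $F$ slot-configurations repeated every frame, with each $r_iF$ integer) in which each slot every input idles or sends one original uncoded packet of one of its flows to a subset of that flow's fanout, each output receives from at most one input, and for every flow and frame $n\ge1$ the oldest $rF$ packets ($r$ the flow's rate) queued at the end of frame $n-1$ are delivered to all outputs of the fanout by the end of frame $n$ (all of them if fewer). A switch with speedup $s$ can go through $s$ configurations per slot, so an admissible $\mathbf r$ is sustainable with speedup $s$ iff $\frac1s\mathbf r\in\mathbf R_{fs}$. *)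

theory Defs
  imports Complex_Main
begin

text \<open>The 2 x N switch: input 1 carries one broadcast flow (flow 0) with fanout
  the outputs {1..N}; input 2 carries, for each i in {1..N}, a unicast flow (flow i)
  with fanout {i}.

  A slot configuration is a pair (a1, a2):
   a1 :: (nat * nat set) option -- input 1 idles (None) or sends the broadcast packet
         with (frame-relative) label k to the set S of outputs (Some (k, S));
   a2 :: nat option             -- input 2 idles (None) or sends a packet of
         unicast flow i to output i (Some i).
  In a frame, the broadcast packets to be delivered are labelled 0, ..., r0*F - 1
  (oldest first); fanout splitting means a packet may be sent to different subsets
  of outputs in different slots.\<close>

definition admissible :: "nat \<Rightarrow> (nat \<Rightarrow> real) \<Rightarrow> bool" where
  "admissible N r \<longleftrightarrow>
     (\<forall>i\<in>{0..N}. r i \<ge> 0) \<and> r 0 \<le> 1 \<and> (\<Sum>i=1..N. r i) \<le> 1 \<and>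
     (\<forall>i\<in>{1..N}. r 0 + r i \<le> 1)"

definition fs_frame_schedule ::
  "nat \<Rightarrow> (nat \<Rightarrow> real) \<Rightarrow> nat \<Rightarrow> (nat \<Rightarrow> (nat \<times> nat set) option) \<Rightarrow> (nat \<Rightarrow> nat option) \<Rightarrow> bool" where
  "fs_frame_schedule N r F c1 c2 \<longleftrightarrow>
     F > 0 \<and>
     (\<forall>i\<in>{0..N}. r i * real F \<in> \<int>) \<and>
     \<comment> \<open>input 1 sends a broadcast packet only to outputs in its fanout\<close>
     (\<forall>t<F. \<forall>k S. c1 t = Some (k, S) \<longrightarrow> S \<subseteq> {1..N}) \<and>
     \<comment> \<open>input 2 sends a unicast packet of flow i only to output i\<close>
     (\<forall>t<F. \<forall>i. c2 t = Some i \<longrightarrow> i \<in> {1..N}) \<and>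
     \<comment> \<open>each output receives from at most one input in each slot\<close>
     (\<forall>t<F. \<forall>i k S. c2 t = Some i \<longrightarrow> c1 t = Some (k, S) \<longrightarrow> i \<notin> S) \<and>
     \<comment> \<open>each of the r0*F broadcast packets of the frame reaches every output\<close>
     (\<forall>k. real k < r 0 * real F \<longrightarrow>
        (\<forall>j\<in>{1..N}. \<exists>t<F. \<exists>S. c1 t = Some (k, S) \<and> j \<in> S)) \<and>
     \<comment> \<open>each unicast flow i gets r_i*F packets delivered per frame\<close>
     (\<forall>i\<in>{1..N}. r i * real F \<le> real (card {t. t < F \<and> c2 t = Some i}))"

definition R_fs :: "nat \<Rightarrow> (nat \<Rightarrow> real) set" where
  "R_fs N = {r. (\<forall>i\<in>{0..N}. r i \<in> \<rat>) \<and>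
               (\<exists>F c1 c2. fs_frame_schedule N r F c1 c2)}"

end

theory Submission
  imports Defs
begin

text \<open>Call a slot busy if input 2 transmits in it, and pure if only input 1 does.
  A broadcast packet that is never sent in a pure slot must reach output 1 in a busy slot,
  where input 2 occupies some output i outside the packet's current subset; so the packet
  needs a second busy slot to reach output i. Hence the broadcast packets of a frame need
  at least (pure slots) + (busy slots)/2 \<ge> r0 F, while the unicast flows alone need
  (\<Sum> ri) F busy slots. Pure and busy slots are disjoint, which gives
  r0 + (\<Sum> ri)/2 \<le> 1 for every rate vector in R_fs. The admissible vector
  r0 = 1 - 1/N, ri = 1/N then forces s \<ge> 3/2 - 1/N.\<close>

lemma card_le_by_single_or_double_preimage:
  assumes "finite A" "finite B"
    and "\<And>k. k \<in> K \<Longrightarrow>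
           (\<exists>t\<in>A. f t = k) \<or> (\<exists>t1\<in>B. \<exists>t2\<in>B. t1 \<noteq> t2 \<and> f t1 = k \<and> f t2 = k)"
  shows "2 * card K \<le> 2 * card A + card B"
proof -
  define D where "D = K - f ` A"
  have K_sub: "K \<subseteq> f ` A \<union> D" unfolding D_def by blast
  have D_sub: "D \<subseteq> f ` B" unfolding D_def using assms(3) by blast
  have fin_D: "finite D" using D_sub assms(2) finite_subset by blast
  have fibre_two: "2 \<le> card {t\<in>B. f t = k}" if "k \<in> D" for k
  proof -
    obtain t1 t2 where "t1 \<in> B" "t2 \<in> B" "t1 \<noteq> t2" "f t1 = k" "f t2 = k"
      using \<open>k \<in> D\<close> assms(3) unfolding D_def by blast
    then have "{t1, t2} \<subseteq> {t\<in>B. f t = k}" by blast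
    then have "card {t1, t2} \<le> card {t\<in>B. f t = k}"
      using assms(2) by (intro card_mono) auto
    with \<open>t1 \<noteq> t2\<close> show ?thesis by simp
  qed
  have "2 * card D = (\<Sum>k\<in>D. 2)" by simp
  also have "\<dots> \<le> (\<Sum>k\<in>D. card {t\<in>B. f t = k})" by (rule sum_mono) (use fibre_two in blast)
  also have "\<dots> = card (\<Union>k\<in>D. {t\<in>B. f t = k})"
    using fin_D assms(2) by (intro card_UN_disjoint[symmetric]) auto
  also have "\<dots> \<le> card B" using assms(2) by (intro card_mono) auto
  finally have "2 * card D \<le> card B" .
  moreover have "card K \<le> card A + card D"
  proof -
    have "card K \<le> card (f ` A \<union> D)"
      using K_sub assms(1) fin_D by (intro card_mono) auto
    also have "\<dots> \<le> card (f ` A) + card D" by (rule card_Un_le)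
    also have "\<dots> \<le> card A + card D" using card_image_le[OF assms(1)] by simp
    finally show ?thesis .
  qed
  ultimately show ?thesis by linarith
qed

lemma card_nat_less_real: "x \<le> real (card {k::nat. real k < x})"
proof -
  have "{k::nat. real k < x} = {..<nat \<lceil>x\<rceil>}" by (auto, linarith+)
  then show ?thesis by simp linarith
qed

context
  fixes N :: nat and r :: "nat \<Rightarrow> real" and F :: nat
    and c1 :: "nat \<Rightarrow> (nat \<times> nat set) option" and c2 :: "nat \<Rightarrow> nat option"
  assumes schedule: "fs_frame_schedule N r F c1 c2"
begin

definition pure_slots :: "nat set" where
  "pure_slots = {t. t < F \<and> c1 t \<noteq> None \<and> c2 t = None}"

definition busy_slots :: "nat set" where
  "busy_slots = {t. t < F \<and> c2 t \<noteq> None}"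

definition packet_label :: "nat \<Rightarrow> nat" where
  "packet_label t = fst (the (c1 t))"

lemma finite_pure_slots: "finite pure_slots"
  and finite_busy_slots: "finite busy_slots"
  unfolding pure_slots_def busy_slots_def by auto

lemma card_pure_plus_busy_le: "card pure_slots + card busy_slots \<le> F"
proof -
  have "card pure_slots + card busy_slots = card (pure_slots \<union> busy_slots)"
    using finite_pure_slots finite_busy_slots
    by (intro card_Un_disjoint[symmetric]) (auto simp: pure_slots_def busy_slots_def)
  also have "\<dots> \<le> card {..<F}"
    by (intro card_mono) (auto simp: pure_slots_def busy_slots_def)
  finally show ?thesis by simp
qed

lemma unicast_demand_le_busy: "(\<Sum>i=1..N. r i) * real F \<le> real (card busy_slots)"
proof -
  define U where "U i = {t. t < F \<and> c2 t = Some i}" for i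
  have "(\<Sum>i=1..N. r i) * real F = (\<Sum>i=1..N. r i * real F)"
    by (simp add: sum_distrib_right)
  also have "\<dots> \<le> (\<Sum>i=1..N. real (card (U i)))"
    using schedule by (intro sum_mono) (auto simp: fs_frame_schedule_def U_def)
  also have "\<dots> = real (card (\<Union>i\<in>{1..N}. U i))"
    by (subst card_UN_disjoint) (auto simp: U_def)
  also have "\<dots> \<le> real (card busy_slots)"
    using finite_busy_slots by (intro of_nat_mono card_mono) (auto simp: U_def busy_slots_def)
  finally show ?thesis .
qed

lemma broadcast_packet_slots:
  assumes "1 \<le> N" and "real k < r 0 * real F"
  shows "(\<exists>t\<in>pure_slots. packet_label t = k) \<or>
         (\<exists>t1\<in>busy_slots. \<exists>t2\<in>busy_slots. t1 \<noteq> t2 \<and>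
            packet_label t1 = k \<and> packet_label t2 = k)"
proof (cases "\<exists>t\<in>pure_slots. packet_label t = k")
  case no_pure: False
  have covered: "\<forall>j\<in>{1..N}. \<exists>t<F. \<exists>S. c1 t = Some (k, S) \<and> j \<in> S"
    using schedule assms(2) unfolding fs_frame_schedule_def by blast
  have busy: "t \<in> busy_slots" "packet_label t = k" if "t < F" "c1 t = Some (k, S)" for t S
  proof -
    show "packet_label t = k" using that by (simp add: packet_label_def)
    with no_pure that show "t \<in> busy_slots"
      by (auto simp: pure_slots_def busy_slots_def)
  qed
  obtain t1 S1 where t1: "t1 < F" "c1 t1 = Some (k, S1)" "1 \<in> S1"
    using covered assms(1) by fastforce
  then obtain i where i: "c2 t1 = Some i" using busy(1) by (force simp: busy_slots_def)
  have "i \<in> {1..N}" "i \<notin> S1"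
    using schedule t1 i unfolding fs_frame_schedule_def by blast+
  then obtain t2 S2 where t2: "t2 < F" "c1 t2 = Some (k, S2)" "i \<in> S2"
    using covered by blast
  have "t1 \<noteq> t2" using t1 t2 \<open>i \<notin> S1\<close> by auto
  with busy t1 t2 show ?thesis by blast
qed simp

lemma broadcast_demand_le:
  assumes "1 \<le> N"
  shows "2 * (r 0 * real F) \<le> 2 * real (card pure_slots) + real (card busy_slots)"
proof -
  have "2 * card {k::nat. real k < r 0 * real F} \<le> 2 * card pure_slots + card busy_slots"
    by (rule card_le_by_single_or_double_preimage[OF finite_pure_slots finite_busy_slots])
      (use broadcast_packet_slots[OF assms] in simp)
  with card_nat_less_real[of "r 0 * real F"] show ?thesis by linarith
qed

lemma frame_capacity_bound:
  assumes "1 \<le> N"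
  shows "r 0 + (\<Sum>i=1..N. r i) / 2 \<le> 1"
proof -
  have "(r 0 + (\<Sum>i=1..N. r i) / 2) * real F \<le> 1 * real F"
    using broadcast_demand_le[OF assms] unicast_demand_le_busy card_pure_plus_busy_le
    by (simp add: algebra_simps)
  moreover have "F > 0" using schedule by (simp add: fs_frame_schedule_def)
  ultimately show ?thesis by simp
qed

end

lemma R_fs_capacity_bound:
  assumes "1 \<le> N" and "r \<in> R_fs N"
  shows "r 0 + (\<Sum>i=1..N. r i) / 2 \<le> 1"
  using assms frame_capacity_bound unfolding R_fs_def by blast

theorem corollary5:
  fixes N :: nat and s :: real
  assumes "N \<ge> 1" and "s > 0"
    and "\<forall>r. (\<forall>i\<in>{0..N}. r i \<in> \<rat>) \<and> admissible N r \<longrightarrow>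
               (\<lambda>i. r i / s) \<in> R_fs N"
  shows "s \<ge> 3 / 2 - 1 / real N"
proof -
  define r :: "nat \<Rightarrow> real" where "r i = (if i = 0 then 1 - 1 / real N else 1 / real N)" for i
  have unicast_sum: "(\<Sum>i=1..N. r i) = 1" using assms(1) by (simp add: r_def)
  have "admissible N r"
    using assms(1) unicast_sum by (auto simp: admissible_def r_def field_simps)
  moreover have "\<forall>i\<in>{0..N}. r i \<in> \<rat>" by (auto simp: r_def)
  ultimately have "(\<lambda>i. r i / s) \<in> R_fs N" using assms(3) by blast
  then have "r 0 / s + (\<Sum>i=1..N. r i / s) / 2 \<le> 1"
    using R_fs_capacity_bound[OF assms(1)] by blast
  then have "(1 - 1 / real N) / s + 1 / s / 2 \<le> 1"
    using assms(1) unicast_sum by (simp add: r_def sum_divide_distrib[symmetric])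
  then show ?thesis using assms(2) by (simp add: field_simps)
qed

end
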